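(* For $n\ge1$, $\lambda\in\mathbb J_n$ and $\mu\in\mathbb J_{n+1}$, $$1_{(\lambda\prec\mu)}=\det[\phi_n(\widetilde\lambda_i,\widetilde\mu_j)]_{i,j=1}^{r_{n+1}}\times\begin{cases}2^{-r_{n+1}},&n\text{ even},\\1,&n\text{ odd}.\end{cases}$$
   Context: $r_n=\lfloor(n+1)/2\rfloor$; $\mathbb J_n$ is the set of partitions $\lambda=(\lambda_1\ge\dots\ge\lambda_{r_n}\ge0)$ of integers, with the convention $\lambda_i=0$ for $i>r_n$. $\widetilde\lambda_i=\lambda_i+r_n-i$ for $\lambda\in\mathbb J_n$ (so if $n$ is even, $\widetilde\lambda_{r_{n+1}}=\widetilde\lambda_{r_n+1}=-1$), and $\widetilde\mu_j=\mu_j+r_{n+1}-j$ for $\mu\in\mathbb J_{n+1}$. $\lambda\prec\mu$ means $\mu_1\ge\lambda_1\ge\mu_2\ge\lambda_2\ge\dots\ge\mu_{r_n}\ge\lambda_{r_n}\ge\mu_{r_n+1}$. $\phi_n(s,t)=2\cdot1_{(s<t)}$ if $n$ even and $1_{(s\le t)}$ if $n$ odd. *)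

theory Defs
  imports Complex_Main "Jordan_Normal_Form.Determinant"
begin

definition rr :: "nat \<Rightarrow> nat" where
  "rr n = (n + 1) div 2"

(* J_n: partitions lam_1 >= ... >= lam_{r_n} >= 0, stored as nat => nat indexed
   from 1, with the convention lam_i = 0 for i > r_n (lam 0 is unused). *)
definition in_J :: "nat \<Rightarrow> (nat \<Rightarrow> nat) \<Rightarrow> bool" where
  "in_J n lam \<longleftrightarrow> (\<forall>i. 1 \<le> i \<and> i < rr n \<longrightarrow> lam (i + 1) \<le> lam i) \<and>
                    (\<forall>i. rr n < i \<longrightarrow> lam i = 0)"

definition tld :: "nat \<Rightarrow> (nat \<Rightarrow> nat) \<Rightarrow> nat \<Rightarrow> int" where
  "tld n lam i = int (lam i) + int (rr n) - int i"

definition interlace :: "nat \<Rightarrow> (nat \<Rightarrow> nat) \<Rightarrow> (nat \<Rightarrow> nat) \<Rightarrow> bool" where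
  "interlace n lam mu \<longleftrightarrow> (\<forall>i. 1 \<le> i \<and> i \<le> rr n \<longrightarrow> lam i \<le> mu i \<and> mu (i + 1) \<le> lam i)"

definition phi :: "nat \<Rightarrow> int \<Rightarrow> int \<Rightarrow> real" where
  "phi n s t = (if even n then (if s < t then 2 else 0) else (if s \<le> t then 1 else 0))"

end

theory Submission
  imports Defs
begin

text \<open>
  After the shift \<open>tld\<close>, \<open>phi\<^sub>n(tld\<^sub>i \<lambda>, tld\<^sub>j \<mu>)\<close> is a fixed constant
  (2 for even \<open>n\<close>, 1 for odd \<open>n\<close>) times the indicator of
  \<open>\<lambda>\<^sub>i - i \<le> \<mu>\<^sub>j - j\<close>. Since both partitions are weakly decreasing, this
  support is a staircase: closed downwards in the column index and upwards
  in the row index. The rows of such a 0/constant matrix are nested initial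
  segments of the columns, so unless row 0 is empty or two consecutive rows
  coincide (determinant 0) row \<open>i\<close> is exactly \<open>{0..i}\<close>, the matrix is lower
  triangular, and the determinant is the constant to the power \<open>r\<^sub>n\<^sub>+\<^sub>1\<close>.
  The shape condition "diagonal in, superdiagonal out" is precisely the two
  halves of the interlacing \<open>\<lambda> \<prec> \<mu>\<close>.
\<close>

context
  fixes m :: nat and P :: "nat \<Rightarrow> nat \<Rightarrow> bool"
  assumes down_closed: "\<And>i j j'. i < m \<Longrightarrow> j < m \<Longrightarrow> j' \<le> j \<Longrightarrow> P i j \<Longrightarrow> P i j'"
    and up_closed: "\<And>i i' j. i' < m \<Longrightarrow> j < m \<Longrightarrow> i \<le> i' \<Longrightarrow> P i j \<Longrightarrow> P i' j"
begin

lemma staircase_row_gains_column: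
  assumes "\<exists>j<m. P i j \<noteq> P (i + 1) j" and "i + 1 < m"
  obtains j where "j < m" "P (i + 1) j" "\<not> P i j"
  using assms up_closed[of "i + 1" _ i] by fastforce

lemma staircase_diagonal:
  assumes "P 0 0" and rows_differ: "\<And>i. i + 1 < m \<Longrightarrow> \<exists>j<m. P i j \<noteq> P (i + 1) j"
    and "i < m"
  shows "P i i"
  using \<open>i < m\<close>
proof (induction i)
  case 0
  then show ?case using \<open>P 0 0\<close> by simp
next
  case (Suc i)
  then obtain j where j: "j < m" "P (i + 1) j" "\<not> P i j"
    using staircase_row_gains_column rows_differ by (metis Suc_eq_plus1)
  have "i < j"
    using Suc down_closed[of i i j] j by (metis Suc_lessD not_le)
  then show ?case
    using down_closed[of "Suc i" j "Suc i"] j Suc.prems by simp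
qed

lemma staircase_superdiagonal:
  assumes rows_differ: "\<And>i. i + 1 < m \<Longrightarrow> \<exists>j<m. P i j \<noteq> P (i + 1) j"
    and "i + 1 < m"
  shows "\<not> P i (i + 1)"
proof -
  have "i \<le> m" using assms(2) by simp
  then have "i + 1 < m \<longrightarrow> \<not> P i (i + 1)"
  proof (induction i rule: inc_induct)
    case (step k)
    show ?case
    proof
      assume k: "k + 1 < m"
      then obtain j where j: "j < m" "P (k + 1) j" "\<not> P k j"
        using staircase_row_gains_column rows_differ by blast
      \<comment> \<open>a column beyond \<open>k + 1\<close> in row \<open>k + 1\<close> would put \<open>k + 2\<close> there too\<close>
      have "j \<le> k + 1"
        using step.IH down_closed[of "k + 1" j "k + 2"] j by fastforce
      then show "\<not> P k (k + 1)"
        using down_closed[of k "k + 1" j] j k by (meson add_lessD1)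
    qed
  qed simp
  then show ?thesis using assms(2) by blast
qed

lemma det_staircase:
  fixes x :: "'a :: comm_ring_1"
  shows "det (mat m m (\<lambda>(i, j). if P i j then x else 0)) =
    (if \<forall>i<m. P i i \<and> (i + 1 < m \<longrightarrow> \<not> P i (i + 1)) then x ^ m else 0)"
proof -
  let ?A = "mat m m (\<lambda>(i, j). if P i j then x else 0) :: 'a mat"
  have A: "?A \<in> carrier_mat m m" by simp
  show ?thesis
  proof (cases "\<forall>i<m. P i i \<and> (i + 1 < m \<longrightarrow> \<not> P i (i + 1))")
    case True
    have "det ?A = prod_list (diag_mat ?A)"
    proof (rule det_lower_triangular[OF _ A])
      fix i j assume ij: "i < j" "j < m"
      then have "\<not> P i j" using True down_closed[of i j "i + 1"] by auto
      then show "?A $$ (i, j) = 0" using ij by auto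
    qed
    also have "\<dots> = x ^ m"
      unfolding prod_list_diag_prod using True by simp
    finally show ?thesis using True by simp
  next
    case False
    then consider "m > 0" "\<not> P 0 0" | k where "k + 1 < m" "\<forall>j<m. P k j = P (k + 1) j"
      using staircase_diagonal staircase_superdiagonal by (metis gr0I less_nat_zero_code)
    then have "det ?A = 0"
    proof cases
      case 1
      then have "?A = mat\<^sub>r m m (\<lambda>i. if i = 0 then 0\<^sub>v m else row ?A i)"
        using down_closed[of 0 _ 0] by (intro eq_matI) auto
      then show ?thesis using det_row_0[OF \<open>m > 0\<close>, of "\<lambda>i. row ?A i"] by auto
    next
      case 2
      then have "row ?A k = row ?A (k + 1)" by (intro eq_vecI) auto
      then show ?thesis using 2 by (intro det_identical_rows[OF A, of k "k + 1"]) auto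
    qed
    then show ?thesis by (simp only: if_not_P[OF False])
  qed
qed

end

lemma in_J_antimono:
  assumes "in_J n lam" "1 \<le> a" "a \<le> b" "b \<le> rr n + 1"
  shows "lam b \<le> lam a"
  using assms(3,4)
proof (induction b rule: dec_induct)
  case (step c)
  then have "lam (Suc c) \<le> lam c"
    using assms(1,2) unfolding in_J_def by (cases "Suc c = rr n + 1") auto
  then show ?case using step by simp
qed simp

lemma phi_tld:
  "phi n (tld n lam i) (tld (n + 1) mu j) =
    (if even n then 2 else 1) * (if int (lam i) - int i \<le> int (mu j) - int j then 1 else 0)"
proof -
  have "rr (n + 1) = rr n + (if even n then 1 else 0)"
    unfolding rr_def by presburger
  then show ?thesis unfolding phi_def tld_def by auto
qed

lemma interlace_iff_diagonal:
  assumes lam: "in_J n lam" and mu: "in_J (n + 1) mu"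
  shows "interlace n lam mu \<longleftrightarrow>
    (\<forall>i<rr (n + 1). lam (i + 1) \<le> mu (i + 1) \<and> (i + 1 < rr (n + 1) \<longrightarrow> mu (i + 2) \<le> lam (i + 1)))"
proof -
  have shifted: "interlace n lam mu \<longleftrightarrow>
      (\<forall>i<rr n. lam (i + 1) \<le> mu (i + 1) \<and> mu (i + 2) \<le> lam (i + 1))"
    unfolding interlace_def
    by (metis One_nat_def Suc_eq_plus1 Suc_le_eq Suc_pred add_2_eq_Suc' le_add2 not_gr_zero)
  have "rr (n + 1) = rr n + 1 \<or> rr (n + 1) = rr n"
    unfolding rr_def by presburger
  then show ?thesis
  proof
    assume "rr (n + 1) = rr n + 1"
    moreover have "lam (rr n + 1) = 0" using lam unfolding in_J_def by simp
    ultimately show ?thesis unfolding shifted by (auto simp: less_Suc_eq) (metis Suc_lessI)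
  next
    assume "rr (n + 1) = rr n"
    moreover from this have "mu (rr n + 1) = 0" using mu unfolding in_J_def by simp
    ultimately show ?thesis unfolding shifted
      by (auto, metis Suc_lessI add_2_eq_Suc' le0 Suc_eq_plus1)
  qed
qed

lemma det_phi_tld:
  assumes lam: "in_J n lam" and mu: "in_J (n + 1) mu"
  shows "det (mat (rr (n + 1)) (rr (n + 1))
      (\<lambda>(i, j). phi n (tld n lam (i + 1)) (tld (n + 1) mu (j + 1)))) =
    (if interlace n lam mu then (if even n then 2 else 1) ^ rr (n + 1) else 0)"
proof -
  define m where "m = rr (n + 1)"
  define c :: real where "c = (if even n then 2 else 1)"
  define P where "P i j \<longleftrightarrow> int (lam (i + 1)) - int (i + 1) \<le> int (mu (j + 1)) - int (j + 1)"
    for i j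
  have "m \<le> rr n + 1" unfolding m_def rr_def by simp
  then have down: "P i j'" if "i < m" "j < m" "j' \<le> j" "P i j" for i j j'
    using that in_J_antimono[OF mu, of "j' + 1" "j + 1"] unfolding P_def m_def by auto
  have up: "P i' j" if "i' < m" "j < m" "i \<le> i'" "P i j" for i i' j
    using that \<open>m \<le> rr n + 1\<close> in_J_antimono[OF lam, of "i + 1" "i' + 1"] unfolding P_def by auto
  have diagonal: "P i i \<longleftrightarrow> lam (i + 1) \<le> mu (i + 1)" for i
    unfolding P_def by simp
  have superdiagonal: "\<not> P i (i + 1) \<longleftrightarrow> mu (i + 2) \<le> lam (i + 1)" for i
    unfolding P_def by auto
  have "(\<lambda>(i, j). phi n (tld n lam (i + 1)) (tld (n + 1) mu (j + 1))) =
      (\<lambda>(i, j). if P i j then c else 0)"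
    unfolding phi_tld P_def c_def by auto
  moreover have "det (mat m m (\<lambda>(i, j). if P i j then c else 0)) =
      (if \<forall>i<m. P i i \<and> (i + 1 < m \<longrightarrow> \<not> P i (i + 1)) then c ^ m else 0)"
    using det_staircase[of m P] down up by blast
  moreover have "(\<forall>i<m. P i i \<and> (i + 1 < m \<longrightarrow> \<not> P i (i + 1))) \<longleftrightarrow> interlace n lam mu"
    unfolding interlace_iff_diagonal[OF lam mu] m_def diagonal superdiagonal ..
  ultimately show ?thesis unfolding m_def c_def by simp
qed

theorem lemma3p2:
  fixes n :: nat and lam mu :: "nat \<Rightarrow> nat"
  assumes "n \<ge> 1" and "in_J n lam" and "in_J (n + 1) mu"
  shows "(if interlace n lam mu then 1 else 0 :: real) =
         det (mat (rr (n + 1)) (rr (n + 1))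
               (\<lambda>(i, j). phi n (tld n lam (i + 1)) (tld (n + 1) mu (j + 1))))
         * (if even n then 1 / 2 ^ rr (n + 1) else 1)"
  \<comment> \<open>the identity also holds for \<open>n = 0\<close>\<close>
  unfolding det_phi_tld[OF assms(2,3)] by simp

end
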